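(* Let $X$ be a paracompact $\sigma$-space, let $\{F_\alpha:\alpha\in A_i\}$ be a discrete family of closed subsets of $X$, and put $F_i=\bigcup\{F_\alpha:\alpha\in A_i\}$. If the pair $(X,F_\alpha)$ is semicanonical for every $\alpha\in A_i$, then the pair $(X,F_i)$ is semicanonical.
   Context: A $\sigma$-space is a regular $T_1$ space with a $\sigma$-discrete network. For a closed subset $A$ of $X$, the pair $(X,A)$ is semicanonical if there is an open cover $\omega$ of $X\setminus A$ such that every open neighborhood $OA$ of $A$ contains an open neighborhood $UA$ of $A$ such that every $G\in\omega$ with $G\cap UA\neq\varnothing$ satisfies $G\subseteq OA$. *)

theory Defs
  imports "HOL-Analysis.Analysis"
begin

definition paracompact_space :: "'a topology \<Rightarrow> bool" where
  "paracompact_space X \<longleftrightarrow>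
     (\<forall>\<U>. (\<forall>U\<in>\<U>. openin X U) \<and> topspace X \<subseteq> \<Union>\<U> \<longrightarrow>
        (\<exists>\<V>. (\<forall>V\<in>\<V>. openin X V) \<and> topspace X \<subseteq> \<Union>\<V> \<and>
             (\<forall>V\<in>\<V>. \<exists>U\<in>\<U>. V \<subseteq> U) \<and> locally_finite_in X \<V>))"

definition discrete_in :: "'a topology \<Rightarrow> 'a set set \<Rightarrow> bool" where
  "discrete_in X \<N> \<longleftrightarrow> \<Union>\<N> \<subseteq> topspace X \<and>
     (\<forall>x\<in>topspace X. \<exists>V. openin X V \<and> x \<in> V \<and>
        (\<forall>N1\<in>\<N>. \<forall>N2\<in>\<N>. N1 \<inter> V \<noteq> {} \<and> N2 \<inter> V \<noteq> {} \<longrightarrow> N1 = N2))"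

definition discrete_family_in :: "'a topology \<Rightarrow> 'i set \<Rightarrow> ('i \<Rightarrow> 'a set) \<Rightarrow> bool" where
  "discrete_family_in X A F \<longleftrightarrow> (\<forall>a\<in>A. F a \<subseteq> topspace X) \<and>
     (\<forall>x\<in>topspace X. \<exists>V. openin X V \<and> x \<in> V \<and>
        (\<forall>a\<in>A. \<forall>b\<in>A. F a \<inter> V \<noteq> {} \<and> F b \<inter> V \<noteq> {} \<longrightarrow> a = b))"

definition network_in :: "'a topology \<Rightarrow> 'a set set \<Rightarrow> bool" where
  "network_in X \<N> \<longleftrightarrow> \<Union>\<N> \<subseteq> topspace X \<and>
     (\<forall>U x. openin X U \<and> x \<in> U \<longrightarrow> (\<exists>N\<in>\<N>. x \<in> N \<and> N \<subseteq> U))"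

definition sigma_discrete_in :: "'a topology \<Rightarrow> 'a set set \<Rightarrow> bool" where
  "sigma_discrete_in X \<N> \<longleftrightarrow>
     (\<exists>\<N>s :: nat \<Rightarrow> 'a set set. (\<forall>n. discrete_in X (\<N>s n)) \<and> \<N> = (\<Union>n. \<N>s n))"

definition sigma_space :: "'a topology \<Rightarrow> bool" where
  "sigma_space X \<longleftrightarrow> regular_space X \<and> t1_space X \<and>
     (\<exists>\<N>. network_in X \<N> \<and> sigma_discrete_in X \<N>)"

definition semicanonical :: "'a topology \<Rightarrow> 'a set \<Rightarrow> bool" where
  "semicanonical X A \<longleftrightarrow>
     (\<exists>\<omega>. (\<forall>G\<in>\<omega>. openin X G \<and> G \<subseteq> topspace X - A) \<and> topspace X - A \<subseteq> \<Union>\<omega> \<and>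
        (\<forall>OA. openin X OA \<and> A \<subseteq> OA \<longrightarrow>
           (\<exists>UA. openin X UA \<and> A \<subseteq> UA \<and> UA \<subseteq> OA \<and>
              (\<forall>G\<in>\<omega>. G \<inter> UA \<noteq> {} \<longrightarrow> G \<subseteq> OA))))"

end

theory Submission
  imports Defs
begin

text \<open>Regularity and discreteness give an open cover whose members have closures meeting at
  most one F a; paracompactness makes it locally finite, say \<W>. Since the closures of any
  subfamily of \<W> have closed union, removing those that miss F a leaves an open neighbourhood
  S a of F a, and a member of \<W> meeting S a has closure meeting F a, hence misses every other
  F b. The union is then witnessed by the traces G \<inter> W of the covers of the single F a on
  those W whose closure meets F a, together with the W whose closure misses every F a: given
  an open N \<supseteq> \<Union>F a, the neighbourhood \<Union>(U a \<inter> S a) works, U a being supplied by the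
  semicanonicity of F a.\<close>

definition meets_at_most_one :: "'i set \<Rightarrow> ('i \<Rightarrow> 'a set) \<Rightarrow> 'a set \<Rightarrow> bool" where
  "meets_at_most_one A F S \<longleftrightarrow>
     (\<forall>a\<in>A. \<forall>b\<in>A. F a \<inter> S \<noteq> {} \<and> F b \<inter> S \<noteq> {} \<longrightarrow> a = b)"

lemma discrete_family_in_meets_at_most_one:
  "discrete_family_in X A F \<longleftrightarrow> (\<forall>a\<in>A. F a \<subseteq> topspace X) \<and>
     (\<forall>x\<in>topspace X. \<exists>V. openin X V \<and> x \<in> V \<and> meets_at_most_one A F V)"
  unfolding discrete_family_in_def meets_at_most_one_def ..

lemma meets_at_most_one_subset:
  "meets_at_most_one A F S \<Longrightarrow> T \<subseteq> S \<Longrightarrow> meets_at_most_one A F T"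
  unfolding meets_at_most_one_def by blast

lemma meets_at_most_one_disjoint:
  "meets_at_most_one A F S \<Longrightarrow> a \<in> A \<Longrightarrow> b \<in> A \<Longrightarrow> F a \<inter> S \<noteq> {} \<Longrightarrow> b \<noteq> a
    \<Longrightarrow> F b \<inter> S = {}"
  unfolding meets_at_most_one_def by blast

definition semicanonical_cover :: "'a topology \<Rightarrow> 'a set \<Rightarrow> 'a set set \<Rightarrow> bool" where
  "semicanonical_cover X C \<omega> \<longleftrightarrow>
     (\<forall>G\<in>\<omega>. openin X G \<and> G \<subseteq> topspace X - C) \<and> topspace X - C \<subseteq> \<Union>\<omega> \<and>
     (\<forall>N. openin X N \<and> C \<subseteq> N \<longrightarrow>
        (\<exists>U. openin X U \<and> C \<subseteq> U \<and> U \<subseteq> N \<and> (\<forall>G\<in>\<omega>. G \<inter> U \<noteq> {} \<longrightarrow> G \<subseteq> N)))"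

lemma semicanonical_iff_cover: "semicanonical X C \<longleftrightarrow> (\<exists>\<omega>. semicanonical_cover X C \<omega>)"
  unfolding semicanonical_def semicanonical_cover_def by blast

lemma regular_space_open_shrink:
  assumes "regular_space X" "openin X V" "x \<in> V"
  obtains U where "openin X U" "x \<in> U" "X closure_of U \<subseteq> V"
proof -
  have "closedin X (topspace X - V)" "x \<in> topspace X - (topspace X - V)"
    using assms(2,3) openin_subset by fastforce+
  then obtain U where "openin X U" "x \<in> U" "disjnt (topspace X - V) (X closure_of U)"
    using assms(1) unfolding regular_space by blast
  with closure_of_subset_topspace[of X U] show ?thesis
    by (intro that) (auto simp: disjnt_def)
qed

lemma paracompact_discrete_family_cover:
  assumes "paracompact_space X" "regular_space X" "discrete_family_in X A F"
  obtains \<W> where "\<forall>W\<in>\<W>. openin X W" "topspace X \<subseteq> \<Union>\<W>" "locally_finite_in X \<W>"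
    "\<forall>W\<in>\<W>. meets_at_most_one A F (X closure_of W)"
proof -
  define \<U> where "\<U> = {U. openin X U \<and> meets_at_most_one A F (X closure_of U)}"
  have "topspace X \<subseteq> \<Union>\<U>"
  proof
    fix x assume "x \<in> topspace X"
    then obtain V where V: "openin X V" "x \<in> V" "meets_at_most_one A F V"
      using assms(3) unfolding discrete_family_in_meets_at_most_one by blast
    then obtain U where U: "openin X U" "x \<in> U" "X closure_of U \<subseteq> V"
      using regular_space_open_shrink[OF assms(2) V(1,2)] by blast
    then have "U \<in> \<U>"
      unfolding \<U>_def using meets_at_most_one_subset[OF V(3) U(3)] by blast
    with U(2) show "x \<in> \<Union>\<U>" by blast
  qed
  moreover have "\<forall>U\<in>\<U>. openin X U" unfolding \<U>_def by blast
  ultimately have "\<exists>\<W>. (\<forall>W\<in>\<W>. openin X W) \<and> topspace X \<subseteq> \<Union>\<W> \<and> (\<forall>W\<in>\<W>. \<exists>U\<in>\<U>. W \<subseteq> U) \<and>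
      locally_finite_in X \<W>"
    using assms(1) unfolding paracompact_space_def by (elim allE[of _ \<U>]) (erule impE, blast+)
  then obtain \<W> where \<W>: "\<forall>W\<in>\<W>. openin X W" "topspace X \<subseteq> \<Union>\<W>" "\<forall>W\<in>\<W>. \<exists>U\<in>\<U>. W \<subseteq> U"
      "locally_finite_in X \<W>"
    by blast
  have "meets_at_most_one A F (X closure_of W)" if W: "W \<in> \<W>" for W
  proof -
    obtain U where "U \<in> \<U>" "W \<subseteq> U" using \<W>(3) W by blast
    then show ?thesis
      unfolding \<U>_def using meets_at_most_one_subset closure_of_mono by blast
  qed
  with \<W> show ?thesis by (intro that) auto
qed

definition avoiding_neighbourhood :: "'a topology \<Rightarrow> 'a set set \<Rightarrow> 'a set \<Rightarrow> 'a set" where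
  "avoiding_neighbourhood X \<W> C =
     topspace X - \<Union>((\<lambda>W. X closure_of W) ` {W\<in>\<W>. X closure_of W \<inter> C = {}})"

lemma openin_avoiding_neighbourhood:
  assumes "locally_finite_in X \<W>"
  shows "openin X (avoiding_neighbourhood X \<W> C)"
proof -
  have "locally_finite_in X {W\<in>\<W>. X closure_of W \<inter> C = {}}"
    using assms by (rule locally_finite_in_subset) auto
  then show ?thesis
    unfolding avoiding_neighbourhood_def
    by (intro openin_diff closedin_Union_locally_finite_closure) auto
qed

lemma subset_avoiding_neighbourhood:
  "C \<subseteq> topspace X \<Longrightarrow> C \<subseteq> avoiding_neighbourhood X \<W> C"
  unfolding avoiding_neighbourhood_def by auto

lemma closure_meets_if_meets_avoiding_neighbourhood:
  assumes "W \<in> \<W>" "W \<subseteq> topspace X" "W \<inter> avoiding_neighbourhood X \<W> C \<noteq> {}"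
  shows "X closure_of W \<inter> C \<noteq> {}"
  using assms closure_of_subset[OF assms(2)] unfolding avoiding_neighbourhood_def by blast

locale semicanonical_union =
  fixes X :: "'a topology" and \<W> :: "'a set set" and A :: "'i set" and F :: "'i \<Rightarrow> 'a set"
    and \<Omega> :: "'i \<Rightarrow> 'a set set"
  assumes openin_cover: "\<And>W. W \<in> \<W> \<Longrightarrow> openin X W"
    and topspace_cover: "topspace X \<subseteq> \<Union>\<W>"
    and locally_finite_cover: "locally_finite_in X \<W>"
    and closure_meets_at_most_one: "\<And>W. W \<in> \<W> \<Longrightarrow> meets_at_most_one A F (X closure_of W)"
    and family_subset: "\<And>a. a \<in> A \<Longrightarrow> F a \<subseteq> topspace X"
    and semicanonical_covers: "\<And>a. a \<in> A \<Longrightarrow> semicanonical_cover X (F a) (\<Omega> a)"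
begin

definition union_cover :: "'a set set" where
  "union_cover = {G \<inter> W | a G W. a \<in> A \<and> G \<in> \<Omega> a \<and> W \<in> \<W> \<and> X closure_of W \<inter> F a \<noteq> {}}
     \<union> {W\<in>\<W>. \<forall>a\<in>A. X closure_of W \<inter> F a = {}}"

lemma subset_closure_cover: "W \<in> \<W> \<Longrightarrow> W \<subseteq> X closure_of W"
  by (simp add: closure_of_subset openin_cover openin_subset)

lemma union_cover_cases:
  assumes "H \<in> union_cover"
  obtains (trace) a G W where "H = G \<inter> W" "a \<in> A" "G \<in> \<Omega> a" "W \<in> \<W>" "X closure_of W \<inter> F a \<noteq> {}"
    | (far) "H \<in> \<W>" "\<forall>a\<in>A. X closure_of H \<inter> F a = {}"
  using assms unfolding union_cover_def by blast

lemma union_cover_open: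
  assumes "H \<in> union_cover"
  shows "openin X H \<and> H \<subseteq> topspace X - (\<Union>a\<in>A. F a)"
  using assms
proof (cases rule: union_cover_cases)
  case (trace a G W)
  have "W \<inter> F b = {}" if "b \<in> A" "b \<noteq> a" for b
    using meets_at_most_one_disjoint[OF closure_meets_at_most_one] subset_closure_cover trace that
    by blast
  moreover have "openin X G" "G \<subseteq> topspace X - F a"
    using semicanonical_covers[OF trace(2)] trace(3) unfolding semicanonical_cover_def by auto
  ultimately show ?thesis using trace openin_cover by blast
next
  case far
  then show ?thesis using openin_cover subset_closure_cover openin_subset by blast
qed

lemma union_cover_covers: "topspace X - (\<Union>a\<in>A. F a) \<subseteq> \<Union>union_cover"
proof
  fix x assume x: "x \<in> topspace X - (\<Union>a\<in>A. F a)"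
  then obtain W where W: "W \<in> \<W>" "x \<in> W" using topspace_cover by blast
  show "x \<in> \<Union>union_cover"
  proof (cases "\<exists>a\<in>A. X closure_of W \<inter> F a \<noteq> {}")
    case True
    then obtain a where a: "a \<in> A" "X closure_of W \<inter> F a \<noteq> {}" by blast
    with x have "x \<in> \<Union>(\<Omega> a)"
      using semicanonical_covers[OF a(1)] unfolding semicanonical_cover_def by blast
    then obtain G where "G \<in> \<Omega> a" "x \<in> G" by blast
    with a W have "G \<inter> W \<in> union_cover" "x \<in> G \<inter> W" unfolding union_cover_def by blast+
    then show ?thesis by blast
  qed (use W in \<open>auto simp: union_cover_def\<close>)
qed

lemma union_cover_neighbourhood:
  assumes N: "openin X N" "(\<Union>a\<in>A. F a) \<subseteq> N"
  shows "\<exists>U. openin X U \<and> (\<Union>a\<in>A. F a) \<subseteq> U \<and> U \<subseteq> N \<and>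
    (\<forall>H\<in>union_cover. H \<inter> U \<noteq> {} \<longrightarrow> H \<subseteq> N)"
proof -
  define S where "S a = avoiding_neighbourhood X \<W> (F a)" for a
  have S_open: "openin X (S a)" for a
    unfolding S_def by (rule openin_avoiding_neighbourhood[OF locally_finite_cover])
  have S_superset: "F a \<subseteq> S a" if "a \<in> A" for a
    unfolding S_def using family_subset[OF that] by (rule subset_avoiding_neighbourhood)
  have S_meets: "X closure_of W \<inter> F a \<noteq> {}" if "W \<in> \<W>" "W \<inter> S a \<noteq> {}" for W a
    using that unfolding S_def
    by (intro closure_meets_if_meets_avoiding_neighbourhood) (auto simp: openin_cover openin_subset)
  have "\<forall>a\<in>A. \<exists>U. openin X U \<and> F a \<subseteq> U \<and> U \<subseteq> N \<and> (\<forall>G\<in>\<Omega> a. G \<inter> U \<noteq> {} \<longrightarrow> G \<subseteq> N)"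
    using semicanonical_covers N unfolding semicanonical_cover_def by (simp add: UN_subset_iff)
  from bchoice[OF this] obtain U where U: "\<forall>a\<in>A. openin X (U a) \<and> F a \<subseteq> U a \<and> U a \<subseteq> N \<and>
      (\<forall>G\<in>\<Omega> a. G \<inter> U a \<noteq> {} \<longrightarrow> G \<subseteq> N)" ..
  note U = U[THEN bspec]
  have H_subset: "H \<subseteq> N" if H: "H \<in> union_cover" and b: "b \<in> A" and meets: "H \<inter> (U b \<inter> S b) \<noteq> {}"
    for H b
    using H
  proof (cases rule: union_cover_cases)
    case (trace a G W)
    have "X closure_of W \<inter> F b \<noteq> {}" using S_meets[OF trace(4)] trace(1) meets by blast
    then have "b = a"
      using closure_meets_at_most_one[OF trace(4)] trace(2,5) b unfolding meets_at_most_one_def by blast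
    then show ?thesis using U[OF trace(2)] trace(1,3) meets by blast
  next
    case far
    then show ?thesis using S_meets[of H b] b meets by blast
  qed
  show ?thesis
  proof (intro exI[of _ "\<Union>a\<in>A. U a \<inter> S a"] conjI ballI impI)
    show "openin X (\<Union>a\<in>A. U a \<inter> S a)"
      using U S_open by (intro openin_Union) auto
    show "(\<Union>a\<in>A. F a) \<subseteq> (\<Union>a\<in>A. U a \<inter> S a)"
      using U S_superset by (intro UN_mono) auto
    show "(\<Union>a\<in>A. U a \<inter> S a) \<subseteq> N"
      using U by (intro UN_least) auto
    fix H assume "H \<in> union_cover" "H \<inter> (\<Union>a\<in>A. U a \<inter> S a) \<noteq> {}"
    then show "H \<subseteq> N" using H_subset by blast
  qed
qed

lemma semicanonical_cover_union_cover: "semicanonical_cover X (\<Union>a\<in>A. F a) union_cover"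
  unfolding semicanonical_cover_def
  using union_cover_open union_cover_covers union_cover_neighbourhood by blast

end

theorem mainTheorem11:
  fixes X :: "'a topology" and A :: "'i set" and F :: "'i \<Rightarrow> 'a set"
  assumes "paracompact_space X" and "sigma_space X"
    and "\<forall>a\<in>A. closedin X (F a)"
    and "discrete_family_in X A F"
    and "\<forall>a\<in>A. semicanonical X (F a)"
  shows "semicanonical X (\<Union>a\<in>A. F a)"
proof -
  have "regular_space X" using assms(2) unfolding sigma_space_def by blast
  then obtain \<W> where \<W>: "\<forall>W\<in>\<W>. openin X W" "topspace X \<subseteq> \<Union>\<W>" "locally_finite_in X \<W>"
      "\<forall>W\<in>\<W>. meets_at_most_one A F (X closure_of W)"
    using paracompact_discrete_family_cover[OF assms(1) _ assms(4)] by blast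
  have "\<forall>a\<in>A. \<exists>\<omega>. semicanonical_cover X (F a) \<omega>"
    using assms(5) unfolding semicanonical_iff_cover .
  then obtain \<Omega> where "\<forall>a\<in>A. semicanonical_cover X (F a) (\<Omega> a)"
    using bchoice by metis
  moreover have "\<forall>a\<in>A. F a \<subseteq> topspace X"
    using assms(3) closedin_subset by blast
  ultimately interpret semicanonical_union X \<W> A F \<Omega>
    using \<W> by unfold_locales auto
  show ?thesis
    unfolding semicanonical_iff_cover using semicanonical_cover_union_cover by blast
qed

end
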